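(* Let $n_1,n_2$ be positive integers, $C=[c_{j_1,j_2}]\in\mathbb{R}^{n_1\times n_2}$, $\varepsilon>0$, and let $\mathbf{p}_1\in\mathbb{R}^{n_1}_{++}$, $\mathbf{p}_2\in\mathbb{R}^{n_2}_{++}$ satisfy $\mathbf{1}_{n_1}^\top\mathbf{p}_1=\mathbf{1}_{n_2}^\top\mathbf{p}_2$. For $(\mathbf{x},\mathbf{y})\in\mathbb{R}^{n_1}\times\mathbb{R}^{n_2}$ let $C(\mathbf{x},\mathbf{y})=C-\mathbf{x}\mathbf{1}_{n_2}^\top-\mathbf{1}_{n_1}\mathbf{y}^\top$, and set $\hat{\mathrm{D}}=\{(\mathbf{x},\mathbf{y})\in\mathbb{R}^{n_1}\times\mathbb{R}^{n_2}:\ C(\mathbf{x},\mathbf{y})>0 \text{ entrywise}\}$, $\mathrm{D}=\{(\mathbf{x},\mathbf{y})\in\hat{\mathrm{D}}:\ \mathbf{1}_{n_1}^\top\mathbf{x}-\mathbf{1}_{n_2}^\top\mathbf{y}=0\}$, $\beta_C(\mathbf{x},\mathbf{y})=-\sum_{j_1=1}^{n_1}\sum_{j_2=1}^{n_2}\log(c_{j_1,j_2}-x_{j_1}-y_{j_2})$ on $\hat{\mathrm{D}}$, and $$\varphi(\mathbf{x},\mathbf{y},C)=\mathbf{p}_1^\top\mathbf{x}+\mathbf{p}_2^\top\mathbf{y}-\varepsilon\beta_C(\mathbf{x},\mathbf{y})+n_1n_2\varepsilon(1-\log\varepsilon).$$ Then $\varphi$ is concave on $\hat{\mathrm{D}}$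 and strictly concave on $\mathrm{D}$, and $$\max_{(\mathbf{x},\mathbf{y})\in\hat{\mathrm{D}}}\varphi(\mathbf{x},\mathbf{y},C)=\max_{(\mathbf{x},\mathbf{y})\in\mathrm{D}}\varphi(\mathbf{x},\mathbf{y},C)=\tau_\beta(C,P,\varepsilon).$$ Moreover, $\varphi$ attains its maximum on $\hat{\mathrm{D}}$ exactly on the line $\mathrm{L}=\{(\mathbf{u}_1,\mathbf{u}_2)+t(\mathbf{1}_{n_1},-\mathbf{1}_{n_2}):t\in\mathbb{R}\}$, which intersects $\mathrm{D}$ at the unique point $(\mathbf{u}_1,\mathbf{u}_2)=((u_{j_1,1})_{j_1},(u_{j_2,2})_{j_2})$, and this point is the one for which the matrix $U=[u_{j_1,j_2}]$, $u_{j_1,j_2}=\frac{\varepsilon}{c_{j_1,j_2}-u_{j_1,1}-u_{j_2,2}}$, lies in $\mathrm{V}_o(P)$ and is the minimizer in the definition of $\tau_\beta(C,P,\varepsilon)$.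
   Context: $\mathbf{1}_n$ is the all-ones vector in $\mathbb{R}^n$; $\mathbb{R}^n_{++}$ is the set of entrywise positive vectors. For $P=(\mathbf{p}_1,\mathbf{p}_2)$, $\mathrm{V}(P)=\{V\in\mathbb{R}^{n_1\times n_2}_+:\ V\mathbf{1}_{n_2}=\mathbf{p}_1,\ V^\top\mathbf{1}_{n_1}=\mathbf{p}_2\}$ and $\mathrm{V}_o(P)$ is the set of entrywise positive matrices in $\mathrm{V}(P)$. For $V\in\mathbb{R}^{n_1\times n_2}_{++}$, $\beta(V)=-\sum_{j_1,j_2}\log v_{j_1,j_2}$, and $\tau_\beta(C,P,\varepsilon)=\min_{V\in\mathrm{V}_o(P)}\big(\operatorname{tr}C^\top V+\varepsilon\beta(V)\big)$. *)

theory Defs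
  imports "HOL-Analysis.Analysis"
begin

text \<open>Indices: rows range over the finite type 'n (n1 = CARD('n)), columns over 'm (n2 = CARD('m)).
  Vectors in R^n1 are real^'n, matrices in R^(n1 x n2) are real^'m^'n (entry C$i$j).\<close>

definition strict_concave_on :: "'a::real_vector set \<Rightarrow> ('a \<Rightarrow> real) \<Rightarrow> bool" where
  "strict_concave_on S f \<longleftrightarrow> convex S \<and>
    (\<forall>x\<in>S. \<forall>y\<in>S. x \<noteq> y \<longrightarrow> (\<forall>t. 0 < t \<and> t < 1 \<longrightarrow>
        f ((1 - t) *\<^sub>R x + t *\<^sub>R y) > (1 - t) * f x + t * f y))"

definition Vset :: "real^'n \<Rightarrow> real^'m \<Rightarrow> (real^'m^'n) set" where
  "Vset p1 p2 = {V. (\<forall>i j. V$i$j \<ge> 0) \<and> (\<forall>i. (\<Sum>j\<in>UNIV. V$i$j) = p1$i)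
                     \<and> (\<forall>j. (\<Sum>i\<in>UNIV. V$i$j) = p2$j)}"

definition Vo :: "real^'n \<Rightarrow> real^'m \<Rightarrow> (real^'m^'n) set" where
  "Vo p1 p2 = {V \<in> Vset p1 p2. \<forall>i j. V$i$j > 0}"

definition beta :: "real^'m^'n \<Rightarrow> real" where
  "beta V = - (\<Sum>i\<in>UNIV. \<Sum>j\<in>UNIV. ln (V$i$j))"

definition tau_obj :: "real^'m^'n \<Rightarrow> real \<Rightarrow> real^'m^'n \<Rightarrow> real" where
  "tau_obj C eps V = (\<Sum>i\<in>UNIV. \<Sum>j\<in>UNIV. C$i$j * V$i$j) + eps * beta V"

text \<open>tau_beta(C,P,eps) = min over Vo(P); rendered as the infimum (attainment is part of the theorem).\<close>
definition tau_beta :: "real^'m^'n \<Rightarrow> real^'n \<Rightarrow> real^'m \<Rightarrow> real \<Rightarrow> real" where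
  "tau_beta C p1 p2 eps = (INF V\<in>Vo p1 p2. tau_obj C eps V)"

definition Dhat :: "real^'m^'n \<Rightarrow> ((real^'n) \<times> (real^'m)) set" where
  "Dhat C = {(x, y). \<forall>i j. C$i$j - x$i - y$j > 0}"

definition D :: "real^'m^'n \<Rightarrow> ((real^'n) \<times> (real^'m)) set" where
  "D C = {(x, y) \<in> Dhat C. (\<Sum>i\<in>UNIV. x$i) - (\<Sum>j\<in>UNIV. y$j) = 0}"

definition betaC :: "real^'m^'n \<Rightarrow> (real^'n) \<times> (real^'m) \<Rightarrow> real" where
  "betaC C z = - (\<Sum>i\<in>UNIV. \<Sum>j\<in>UNIV. ln (C$i$j - (fst z)$i - (snd z)$j))"

definition phi :: "real^'n \<Rightarrow> real^'m \<Rightarrow> real \<Rightarrow> real^'m^'n \<Rightarrow> (real^'n) \<times> (real^'m) \<Rightarrow> real" where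
  "phi p1 p2 eps C z = p1 \<bullet> fst z + p2 \<bullet> snd z - eps * betaC C z
      + real (CARD('n) * CARD('m)) * eps * (1 - ln eps)"

definition Lline :: "real^'n \<Rightarrow> real^'m \<Rightarrow> ((real^'n) \<times> (real^'m)) set" where
  "Lline u1 u2 = {(u1 + t *\<^sub>R (\<chi> i. 1), u2 - t *\<^sub>R (\<chi> j. 1)) | t. True}"

definition Umat :: "real \<Rightarrow> real^'m^'n \<Rightarrow> real^'n \<Rightarrow> real^'m \<Rightarrow> real^'m^'n" where
  "Umat eps C x y = (\<chi> i j. eps / (C$i$j - x$i - y$j))"

end

theory Submission
  imports Defs
begin

text \<open>
  For \<open>z\<close> in \<open>Dhat C\<close> and \<open>V\<close> in \<open>Vo p1 p2\<close> the marginal constraints turn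
  \<open>tau_obj C eps V - phi z\<close> into a sum, over the entries, of \<open>g (s_ij v_ij)\<close>, where \<open>s_ij\<close> are the
  slacks \<open>c_ij - x_i - y_j\<close> and \<open>g s = s - eps - eps ln (s / eps)\<close> is nonnegative with \<open>g s = 0\<close>
  only for \<open>s = eps\<close> (Fenchel--Young for the logarithmic barrier). So \<open>phi \<le> tau_beta\<close>, with
  equality for a feasible \<open>V\<close> exactly when \<open>V = U(z)\<close>.

  Since both marginals have the same mass, \<open>phi\<close> is constant along the direction \<open>(1, -1)\<close>,
  which leaves the slacks unchanged; on the hyperplane \<open>D\<close> distinct points have distinct slacks,
  so \<open>phi\<close> is strictly concave there because \<open>ln\<close> is. A maximiser exists since on a
  superlevel set of \<open>phi\<close> the same gap identity confines every slack to a compact interval. At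
  the maximiser the gradient of \<open>phi\<close> vanishes, and in coordinate directions this says that
  \<open>U(z)\<close> has marginals \<open>p1\<close> and \<open>p2\<close>. Thus \<open>U(z)\<close> attains the weak duality bound, so it is the
  unique minimiser, and the maximisers of \<open>phi\<close> are the points with the slacks of \<open>z\<close>: the line
  through \<open>z\<close>.
\<close>

lemma ln_concave_comb:
  fixes a b t :: real
  assumes "0 < a" "0 < b" "0 \<le> t" "t \<le> 1"
  shows "(1 - t) * ln a + t * ln b \<le> ln ((1 - t) * a + t * b)"
  using concave_onD[OF ln_concave, of t a b] assms by simp

lemma ln_less_minus_one: "0 < (x::real) \<Longrightarrow> x \<noteq> 1 \<Longrightarrow> ln x < x - 1"
  using ln_eq_minus_one ln_le_minus_one nless_le by blast

lemma ln_strictly_concave: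
  fixes a b t :: real
  assumes "0 < a" "0 < b" "a \<noteq> b" "0 < t" "t < 1"
  shows "(1 - t) * ln a + t * ln b < ln ((1 - t) * a + t * b)"
proof -
  define m where "m = (1 - t) * a + t * b"
  have m: "0 < m"
    unfolding m_def using assms by (intro add_pos_pos mult_pos_pos) auto
  have "a \<noteq> m"
    using assms by (simp add: m_def algebra_simps)
  then have "ln (a / m) < a / m - 1"
    using assms m by (intro ln_less_minus_one) auto
  moreover have "ln (b / m) \<le> b / m - 1"
    using assms m by (intro ln_le_minus_one) simp
  ultimately have "(1 - t) * ln (a / m) + t * ln (b / m) < (1 - t) * (a / m - 1) + t * (b / m - 1)"
    using assms by (intro add_less_le_mono mult_strict_left_mono mult_left_mono) auto
  also have "\<dots> = 0"
    using m by (simp add: m_def field_simps)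
  finally have "(1 - t) * (ln a - ln m) + t * (ln b - ln m) < 0"
    using assms m by (simp add: ln_div)
  then show ?thesis
    by (simp add: m_def algebra_simps)
qed

text \<open>For \<open>a, v > 0\<close> the Fenchel--Young gap of the barrier \<open>-eps ln\<close> with itself,
  \<open>a v - eps ln a - eps ln v - eps + eps ln eps\<close>, depends only on \<open>s = a v\<close>.\<close>
definition log_gap :: "real \<Rightarrow> real \<Rightarrow> real" where
  "log_gap eps s = s - eps - eps * ln (s / eps)"

lemma log_gap_eq: "0 < eps \<Longrightarrow> 0 < s \<Longrightarrow> log_gap eps s = eps * (s / eps - 1 - ln (s / eps))"
  by (simp add: log_gap_def algebra_simps)

lemma log_gap_nonneg: "0 < eps \<Longrightarrow> 0 < s \<Longrightarrow> 0 \<le> log_gap eps s"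
  using ln_le_minus_one[of "s / eps"] by (simp add: log_gap_eq)

lemma log_gap_eq_0_iff: "0 < eps \<Longrightarrow> 0 < s \<Longrightarrow> log_gap eps s = 0 \<longleftrightarrow> s = eps"
  using ln_eq_minus_one[of "s / eps"] by (auto simp: log_gap_eq)

lemma log_gap_le_imp_bounds:
  assumes "0 < eps" "0 < s" "log_gap eps s \<le> R"
  shows "eps * exp (- (R + eps) / eps) \<le> s" and "s \<le> 2 * (R + eps)"
proof -
  have "- (R + eps) / eps \<le> ln (s / eps)"
    using assms by (simp add: log_gap_def divide_le_eq algebra_simps)
  then have "exp (- (R + eps) / eps) \<le> s / eps"
    using assms by (metis divide_pos_pos exp_le_cancel_iff exp_ln)
  then show "eps * exp (- (R + eps) / eps) \<le> s"
    using assms by (simp add: le_divide_eq mult.commute)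
  have "ln (s / eps) = ln (s / eps / 2) + ln 2"
    using assms by (simp add: ln_div ln_mult)
  also have "\<dots> \<le> s / eps / 2"
    using ln_le_minus_one[of "s / eps / 2"] ln_2_less_1 assms by simp
  finally have "ln (s / eps) \<le> s / eps / 2" .
  then have "s / 2 - eps \<le> log_gap eps s"
    using assms by (simp add: log_gap_def field_simps)
  then show "s \<le> 2 * (R + eps)"
    using assms by simp
qed

lemma abs_le_of_abs_scaled_add_le:
  fixes N x s B :: real
  assumes "1 \<le> N" "\<bar>N * x + s\<bar> \<le> N * B"
  shows "\<bar>x\<bar> \<le> B + \<bar>s\<bar>"
proof -
  have "N * \<bar>x\<bar> \<le> N * B + \<bar>s\<bar>"
    using assms(2) abs_triangle_ineq4[of "N * x + s" s] assms(1) by (simp add: abs_mult)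
  also have "\<dots> \<le> N * (B + \<bar>s\<bar>)"
    using assms(1) by (simp add: distrib_left mult_le_cancel_right1)
  finally show ?thesis
    using assms(1) by simp
qed

section \<open>Slacks and weak duality\<close>

definition slack :: "real^'m^'n \<Rightarrow> (real^'n) \<times> (real^'m) \<Rightarrow> 'n \<Rightarrow> 'm \<Rightarrow> real" where
  "slack C z i j = C$i$j - fst z$i - snd z$j"

definition balanced :: "(real^'n) \<times> (real^'m) \<Rightarrow> bool" where
  "balanced z \<longleftrightarrow> (\<Sum>i\<in>UNIV. fst z$i) = (\<Sum>j\<in>UNIV. snd z$j)"

lemma Dhat_iff_slack: "z \<in> Dhat C \<longleftrightarrow> (\<forall>i j. 0 < slack C z i j)"
  by (cases z) (simp add: Dhat_def slack_def)

lemma D_iff_balanced: "z \<in> D C \<longleftrightarrow> z \<in> Dhat C \<and> balanced z"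
  by (cases z) (simp add: D_def balanced_def)

lemma slack_eq_iff: "slack C z i j = slack C w i j \<longleftrightarrow> fst z$i + snd z$j = fst w$i + snd w$j"
  by (auto simp: slack_def)

lemma phi_eq_slack:
  fixes C :: "real^'m^'n"
  shows "phi p1 p2 eps C z = p1 \<bullet> fst z + p2 \<bullet> snd z + eps * (\<Sum>i\<in>UNIV. \<Sum>j\<in>UNIV. ln (slack C z i j))
      + real (CARD('n) * CARD('m)) * eps * (1 - ln eps)"
  by (simp add: phi_def betaC_def slack_def)

lemma Umat_eq_slack: "Umat eps C (fst z) (snd z) $ i $ j = eps / slack C z i j"
  by (simp add: Umat_def slack_def)

lemma sum_slack_mult_eq:
  fixes C V :: "real^'m^'n"
  assumes "V \<in> Vset p1 p2"
  shows "(\<Sum>i\<in>UNIV. \<Sum>j\<in>UNIV. slack C z i j * V$i$j)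
    = (\<Sum>i\<in>UNIV. \<Sum>j\<in>UNIV. C$i$j * V$i$j) - p1 \<bullet> fst z - p2 \<bullet> snd z"
proof -
  have row: "\<And>i. (\<Sum>j\<in>UNIV. V$i$j) = p1$i" and col: "\<And>j. (\<Sum>i\<in>UNIV. V$i$j) = p2$j"
    using assms by (auto simp: Vset_def)
  have "p1 \<bullet> fst z = (\<Sum>i\<in>UNIV. \<Sum>j\<in>UNIV. fst z$i * V$i$j)"
    by (simp add: inner_vec_def sum_distrib_left mult.commute flip: row)
  moreover have "p2 \<bullet> snd z = (\<Sum>i\<in>UNIV. \<Sum>j\<in>UNIV. snd z$j * V$i$j)"
    by (simp add: inner_vec_def sum_distrib_left mult.commute flip: col) (rule sum.swap)
  ultimately show ?thesis
    by (simp add: slack_def left_diff_distrib sum_subtractf)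
qed

lemma tau_obj_minus_phi:
  fixes C V :: "real^'m^'n"
  assumes eps: "0 < eps" and z: "z \<in> Dhat C" and V: "V \<in> Vo p1 p2"
  shows "tau_obj C eps V - phi p1 p2 eps C z
    = (\<Sum>i\<in>UNIV. \<Sum>j\<in>UNIV. log_gap eps (slack C z i j * V$i$j))"
proof -
  have gap: "log_gap eps (slack C z i j * V$i$j)
      = slack C z i j * V$i$j - eps * ln (V$i$j) - eps * ln (slack C z i j) - eps * (1 - ln eps)" for i j
  proof -
    have "0 < slack C z i j" "0 < V$i$j"
      using z V by (auto simp: Dhat_iff_slack Vo_def)
    then show ?thesis
      using eps by (simp add: log_gap_def ln_mult ln_div algebra_simps)
  qed
  have "(\<Sum>i\<in>UNIV. \<Sum>j\<in>UNIV. log_gap eps (slack C z i j * V$i$j))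
      = (\<Sum>i\<in>UNIV. \<Sum>j\<in>UNIV. slack C z i j * V$i$j) - eps * (\<Sum>i\<in>UNIV. \<Sum>j\<in>UNIV. ln (V$i$j))
        - eps * (\<Sum>i\<in>UNIV. \<Sum>j\<in>UNIV. ln (slack C z i j)) - real (CARD('n) * CARD('m)) * eps * (1 - ln eps)"
    by (simp add: gap sum_subtractf sum_distrib_left)
  moreover have "V \<in> Vset p1 p2"
    using V by (simp add: Vo_def)
  ultimately show ?thesis
    by (simp add: tau_obj_def beta_def phi_eq_slack sum_slack_mult_eq)
qed

lemma phi_le_tau_obj:
  fixes C V :: "real^'m^'n"
  assumes "0 < eps" "z \<in> Dhat C" "V \<in> Vo p1 p2"
  shows "phi p1 p2 eps C z \<le> tau_obj C eps V"
proof -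
  have "0 \<le> log_gap eps (slack C z i j * V$i$j)" for i j
    using assms by (intro log_gap_nonneg) (auto simp: Dhat_iff_slack Vo_def)
  then have "0 \<le> (\<Sum>i\<in>UNIV. \<Sum>j\<in>UNIV. log_gap eps (slack C z i j * V$i$j))"
    by (intro sum_nonneg)
  then show ?thesis
    using tau_obj_minus_phi[OF assms] by linarith
qed

lemma phi_eq_tau_obj_imp_Umat:
  fixes C V :: "real^'m^'n"
  assumes "0 < eps" "z \<in> Dhat C" "V \<in> Vo p1 p2" and eq: "phi p1 p2 eps C z = tau_obj C eps V"
  shows "V = Umat eps C (fst z) (snd z)"
proof -
  have pos: "0 < slack C z i j * V$i$j" for i j
    using assms by (auto simp: Dhat_iff_slack Vo_def)
  have nonneg: "0 \<le> log_gap eps (slack C z i j * V$i$j)" for i j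
    using assms(1) pos by (rule log_gap_nonneg)
  have "(\<Sum>i\<in>UNIV. \<Sum>j\<in>UNIV. log_gap eps (slack C z i j * V$i$j)) = 0"
    using tau_obj_minus_phi[OF assms(1-3)] eq by simp
  then have "log_gap eps (slack C z i j * V$i$j) = 0" for i j
    by (simp add: sum_nonneg_eq_0_iff sum_nonneg nonneg)
  then have "slack C z i j * V$i$j = eps" for i j
    using log_gap_eq_0_iff[OF assms(1) pos] by blast
  moreover have "slack C z i j \<noteq> 0" for i j
    using assms(2) by (simp add: Dhat_iff_slack less_imp_neq[symmetric])
  ultimately show ?thesis
    by (simp add: vec_eq_iff Umat_eq_slack eq_divide_eq mult.commute)
qed

lemma phi_eq_tau_obj_Umat:
  fixes C :: "real^'m^'n"
  assumes "0 < eps" "z \<in> Dhat C" "Umat eps C (fst z) (snd z) \<in> Vo p1 p2"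
  shows "phi p1 p2 eps C z = tau_obj C eps (Umat eps C (fst z) (snd z))"
proof -
  have "slack C z i j * Umat eps C (fst z) (snd z) $ i $ j = eps" for i j
    using assms(2) by (simp add: Umat_eq_slack Dhat_iff_slack less_imp_neq[symmetric])
  then show ?thesis
    using tau_obj_minus_phi[OF assms] assms(1) by (simp add: log_gap_def)
qed

lemma Umat_unique_minimiser:
  fixes C :: "real^'m^'n"
  assumes "0 < eps" "z \<in> Dhat C" and U: "Umat eps C (fst z) (snd z) \<in> Vo p1 p2"
  shows "V \<in> Vo p1 p2 \<Longrightarrow> tau_obj C eps (Umat eps C (fst z) (snd z)) \<le> tau_obj C eps V"
    and "tau_beta C p1 p2 eps = tau_obj C eps (Umat eps C (fst z) (snd z))"
    and "V \<in> Vo p1 p2 \<Longrightarrow> tau_obj C eps V = tau_beta C p1 p2 eps \<Longrightarrow> V = Umat eps C (fst z) (snd z)"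
proof -
  have phi_z: "phi p1 p2 eps C z = tau_obj C eps (Umat eps C (fst z) (snd z))"
    using assms by (rule phi_eq_tau_obj_Umat)
  show le: "tau_obj C eps (Umat eps C (fst z) (snd z)) \<le> tau_obj C eps V" if "V \<in> Vo p1 p2" for V
    using phi_le_tau_obj[OF assms(1,2) that] phi_z by simp
  show tau: "tau_beta C p1 p2 eps = tau_obj C eps (Umat eps C (fst z) (snd z))"
    unfolding tau_beta_def using U le by (intro cInf_eq_minimum) auto
  show "V = Umat eps C (fst z) (snd z)" if "V \<in> Vo p1 p2" "tau_obj C eps V = tau_beta C p1 p2 eps"
    using phi_eq_tau_obj_imp_Umat[OF assms(1,2) that(1)] that(2) tau phi_z by simp
qed

section \<open>The domains and the line of maximisers\<close>

lemma Dhat_eq_Inter_halfspaces: "Dhat C = (\<Inter>i. \<Inter>j. {z. (axis i 1, axis j 1) \<bullet> z < C$i$j})"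
  by (simp add: set_eq_iff Dhat_iff_slack slack_def inner_prod_def inner_axis' diff_diff_eq)

lemma open_Dhat: "open (Dhat C)"
  by (simp add: Dhat_eq_Inter_halfspaces open_INT open_halfspace_lt)

lemma convex_Dhat: "convex (Dhat C)"
  by (simp add: Dhat_eq_Inter_halfspaces convex_INT convex_halfspace_lt)

lemma D_eq_Dhat_Int_hyperplane: "D C = Dhat C \<inter> {z. ((\<chi> i. 1), - (\<chi> j. 1)) \<bullet> z = 0}"
  by (auto simp: set_eq_iff D_iff_balanced balanced_def inner_prod_def inner_vec_def sum_negf)

lemma convex_D: "convex (D C)"
  by (simp add: D_eq_Dhat_Int_hyperplane convex_Int convex_Dhat convex_hyperplane)

lemma Dhat_nonempty: "Dhat C \<noteq> {}"
proof -
  define x where "x = (\<chi> i. Min (range (\<lambda>j. C$i$j)) - 1)"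
  have "0 < slack C (x, 0) i j" for i j
  proof -
    have "Min (range (\<lambda>j. C$i$j)) \<le> C$i$j"
      by (rule Min_le) auto
    then show ?thesis
      unfolding slack_def x_def by (simp only: vec_lambda_beta fst_conv snd_conv zero_index)
  qed
  then have "(x, 0) \<in> Dhat C"
    by (simp add: Dhat_iff_slack)
  then show ?thesis
    by blast
qed

lemma mem_Lline_iff:
  fixes z :: "(real^'n) \<times> (real^'m)"
  shows "z \<in> Lline u1 u2 \<longleftrightarrow> (\<forall>i j. fst z$i + snd z$j = u1$i + u2$j)"
proof
  assume "z \<in> Lline u1 u2"
  then show "\<forall>i j. fst z$i + snd z$j = u1$i + u2$j"
    by (auto simp: Lline_def)
next
  assume eq: "\<forall>i j. fst z$i + snd z$j = u1$i + u2$j"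
  obtain i0 :: 'n and j0 :: 'm where True by blast
  define t where "t = fst z$i0 - u1$i0"
  have "fst z$i = u1$i + t" for i
    using eq[rule_format, of i j0] eq[rule_format, of i0 j0] unfolding t_def by linarith
  moreover have "snd z$j = u2$j - t" for j
    using eq[rule_format, of i0 j] unfolding t_def by linarith
  ultimately have "z = (u1 + t *\<^sub>R (\<chi> i. 1), u2 - t *\<^sub>R (\<chi> j. 1))"
    by (simp add: vec_eq_iff prod_eq_iff)
  then show "z \<in> Lline u1 u2"
    by (auto simp: Lline_def)
qed

lemma Lline_self: "(u1, u2) \<in> Lline u1 u2"
  by (simp add: mem_Lline_iff)

lemma slack_Lline: "z \<in> Lline u1 u2 \<Longrightarrow> slack C z i j = slack C (u1, u2) i j"
  by (simp add: mem_Lline_iff slack_eq_iff)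

lemma Dhat_Lline: "z \<in> Lline u1 u2 \<Longrightarrow> z \<in> Dhat C \<longleftrightarrow> (u1, u2) \<in> Dhat C"
  by (simp add: Dhat_iff_slack slack_Lline)

lemma balanced_Lline_unique:
  fixes u1 :: "real^'n" and u2 :: "real^'m"
  assumes "z \<in> Lline u1 u2" "balanced z" "balanced (u1, u2)"
  shows "z = (u1, u2)"
proof -
  obtain t where z: "z = (u1 + t *\<^sub>R (\<chi> i. 1), u2 - t *\<^sub>R (\<chi> j. 1))"
    using assms(1) by (auto simp: Lline_def)
  have "t * (real CARD('n) + real CARD('m)) = 0"
    using assms(2,3) by (simp add: z balanced_def sum.distrib sum_subtractf algebra_simps)
  then have "t = 0"
    by (simp add: add_nonneg_eq_0_iff)
  then show ?thesis
    by (simp add: z)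
qed

lemma Lline_Int_D:
  assumes "(u1, u2) \<in> D C"
  shows "Lline u1 u2 \<inter> D C = {(u1, u2)}"
proof (intro equalityI subsetI)
  fix z
  assume "z \<in> Lline u1 u2 \<inter> D C"
  then show "z \<in> {(u1, u2)}"
    using balanced_Lline_unique[of z u1 u2] assms by (simp add: D_iff_balanced)
qed (use assms Lline_self in simp)

lemma Lline_meets_balanced:
  fixes u1 :: "real^'n" and u2 :: "real^'m"
  shows "\<exists>z\<in>Lline u1 u2. balanced z"
proof -
  define t where "t = ((\<Sum>j\<in>UNIV. u2$j) - (\<Sum>i\<in>UNIV. u1$i)) / (real CARD('n) + real CARD('m))"
  have "t * (real CARD('n) + real CARD('m)) = (\<Sum>j\<in>UNIV. u2$j) - (\<Sum>i\<in>UNIV. u1$i)"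
    by (simp add: t_def add_nonneg_eq_0_iff)
  then have "balanced (u1 + t *\<^sub>R (\<chi> i. 1), u2 - t *\<^sub>R (\<chi> j. 1))"
    by (simp add: balanced_def sum.distrib sum_subtractf algebra_simps)
  then show ?thesis
    unfolding Lline_def by blast
qed

lemma phi_Lline:
  fixes C :: "real^'m^'n"
  assumes mass: "(\<Sum>i\<in>UNIV. p1$i) = (\<Sum>j\<in>UNIV. p2$j)" and z: "z \<in> Lline u1 u2"
  shows "phi p1 p2 eps C z = phi p1 p2 eps C (u1, u2)"
proof -
  obtain t where "z = (u1 + t *\<^sub>R (\<chi> i. 1), u2 - t *\<^sub>R (\<chi> j. 1))"
    using z by (auto simp: Lline_def)
  moreover have "p1 \<bullet> (\<chi> i. 1) = p2 \<bullet> (\<chi> j. 1)"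
    using mass by (simp add: inner_vec_def)
  ultimately have "p1 \<bullet> fst z + p2 \<bullet> snd z = p1 \<bullet> u1 + p2 \<bullet> u2"
    by (simp add: inner_add_right inner_diff_right)
  then show ?thesis
    using z by (simp add: phi_eq_slack slack_Lline)
qed

lemma exists_D_same_phi:
  fixes C :: "real^'m^'n"
  assumes mass: "(\<Sum>i\<in>UNIV. p1$i) = (\<Sum>j\<in>UNIV. p2$j)" and z: "z \<in> Dhat C"
  shows "\<exists>z'\<in>D C. phi p1 p2 eps C z' = phi p1 p2 eps C z"
proof -
  obtain z' where "z' \<in> Lline (fst z) (snd z)" "balanced z'"
    using Lline_meets_balanced by blast
  then show ?thesis
    using z phi_Lline[OF mass] Dhat_Lline by (metis D_iff_balanced prod.collapse)
qed

lemma Umat_eq_iff_mem_Lline: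
  "eps \<noteq> 0 \<Longrightarrow> Umat eps C x y = Umat eps C u1 u2 \<longleftrightarrow> (x, y) \<in> Lline u1 u2"
  by (auto simp: Umat_def vec_eq_iff mem_Lline_iff algebra_simps)

lemma Umat_feasible_unique_on_D:
  fixes C :: "real^'m^'n"
  assumes eps: "0 < eps" and zw: "z \<in> D C" "w \<in> D C"
    and U: "Umat eps C (fst z) (snd z) \<in> Vo p1 p2" "Umat eps C (fst w) (snd w) \<in> Vo p1 p2"
  shows "z = w"
proof -
  have Dhat: "z \<in> Dhat C" "w \<in> Dhat C"
    using zw by (simp_all add: D_iff_balanced)
  have "Umat eps C (fst z) (snd z) = Umat eps C (fst w) (snd w)"
    using Umat_unique_minimiser[OF eps Dhat(1) U(1)] Umat_unique_minimiser[OF eps Dhat(2) U(2)] U by metis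
  then have "z \<in> Lline (fst w) (snd w)"
    using Umat_eq_iff_mem_Lline[of eps C "fst z" "snd z" "fst w" "snd w"] eps by simp
  then show ?thesis
    using balanced_Lline_unique[of z "fst w" "snd w"] zw by (simp add: D_iff_balanced)
qed

section \<open>Concavity and the first-order condition\<close>

lemma slack_convex_comb:
  "slack C ((1 - t) *\<^sub>R z + t *\<^sub>R w) i j = (1 - t) * slack C z i j + t * slack C w i j"
  by (simp add: slack_def algebra_simps)

lemma phi_convex_comb:
  fixes C :: "real^'m^'n"
  shows "phi p1 p2 eps C ((1 - t) *\<^sub>R z + t *\<^sub>R w) - ((1 - t) * phi p1 p2 eps C z + t * phi p1 p2 eps C w)
    = eps * (\<Sum>i\<in>UNIV. \<Sum>j\<in>UNIV. ln ((1 - t) * slack C z i j + t * slack C w i j)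
        - ((1 - t) * ln (slack C z i j) + t * ln (slack C w i j)))"
proof -
  define S where "S = (\<Sum>i\<in>UNIV. \<Sum>j\<in>UNIV. ln ((1 - t) * slack C z i j + t * slack C w i j))"
  define Sz where "Sz = (\<Sum>i\<in>UNIV. \<Sum>j\<in>UNIV. ln (slack C z i j))"
  define Sw where "Sw = (\<Sum>i\<in>UNIV. \<Sum>j\<in>UNIV. ln (slack C w i j))"
  define K where "K = real (CARD('n) * CARD('m)) * eps * (1 - ln eps)"
  have sums: "(\<Sum>i\<in>UNIV. \<Sum>j\<in>UNIV. ln ((1 - t) * slack C z i j + t * slack C w i j)
        - ((1 - t) * ln (slack C z i j) + t * ln (slack C w i j))) = S - (1 - t) * Sz - t * Sw"
    unfolding S_def Sz_def Sw_def by (simp add: sum_subtractf sum.distrib sum_distrib_left)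
  have comb: "phi p1 p2 eps C ((1 - t) *\<^sub>R z + t *\<^sub>R w)
      = (1 - t) * (p1 \<bullet> fst z + p2 \<bullet> snd z) + t * (p1 \<bullet> fst w + p2 \<bullet> snd w) + eps * S + K"
    unfolding phi_eq_slack slack_convex_comb S_def K_def by (simp add: inner_add_right algebra_simps)
  have ends: "phi p1 p2 eps C z = p1 \<bullet> fst z + p2 \<bullet> snd z + eps * Sz + K"
    "phi p1 p2 eps C w = p1 \<bullet> fst w + p2 \<bullet> snd w + eps * Sw + K"
    unfolding phi_eq_slack Sz_def Sw_def K_def by simp_all
  show ?thesis
    unfolding sums comb ends by (simp add: algebra_simps)
qed

lemma concave_on_phi:
  fixes C :: "real^'m^'n"
  assumes "0 < eps"
  shows "concave_on (Dhat C) (phi p1 p2 eps C)"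
  unfolding concave_on_def
proof (rule convex_onI[OF _ convex_Dhat])
  fix t :: real and z w
  assume t: "0 < t" "t < 1" and zw: "z \<in> Dhat C" "w \<in> Dhat C"
  have "(1 - t) * ln (slack C z i j) + t * ln (slack C w i j) \<le> ln ((1 - t) * slack C z i j + t * slack C w i j)" for i j
    using zw t by (intro ln_concave_comb) (auto simp: Dhat_iff_slack)
  then have "0 \<le> eps * (\<Sum>i\<in>UNIV. \<Sum>j\<in>UNIV. ln ((1 - t) * slack C z i j + t * slack C w i j)
        - ((1 - t) * ln (slack C z i j) + t * ln (slack C w i j)))"
    using assms by (intro mult_nonneg_nonneg sum_nonneg) auto
  then show "- phi p1 p2 eps C ((1 - t) *\<^sub>R z + t *\<^sub>R w) \<le> (1 - t) * - phi p1 p2 eps C z + t * - phi p1 p2 eps C w"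
    using phi_convex_comb[of p1 p2 eps C t z w] by linarith
qed

lemma strict_concave_on_phi:
  fixes C :: "real^'m^'n"
  assumes "0 < eps"
  shows "strict_concave_on (D C) (phi p1 p2 eps C)"
  unfolding strict_concave_on_def
proof (intro conjI convex_D ballI allI impI)
  fix z w and t :: real
  assume zw: "z \<in> D C" "w \<in> D C" "z \<noteq> w" and t: "0 < t \<and> t < 1"
  define gap where "gap i j = ln ((1 - t) * slack C z i j + t * slack C w i j)
      - ((1 - t) * ln (slack C z i j) + t * ln (slack C w i j))" for i j
  have pos: "0 < slack C z i j" "0 < slack C w i j" for i j
    using zw by (auto simp: D_iff_balanced Dhat_iff_slack)
  have "z \<notin> Lline (fst w) (snd w)"
    using zw balanced_Lline_unique[of z "fst w" "snd w"] by (auto simp: D_iff_balanced)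
  then obtain i0 j0 where "slack C z i0 j0 \<noteq> slack C w i0 j0"
    by (auto simp: mem_Lline_iff slack_eq_iff)
  then have "0 < gap i0 j0"
    unfolding gap_def using pos t by (simp add: ln_strictly_concave)
  moreover have "0 \<le> gap i j" for i j
    unfolding gap_def using pos t by (simp add: ln_concave_comb)
  ultimately have "0 < eps * (\<Sum>i\<in>UNIV. \<Sum>j\<in>UNIV. gap i j)"
    using assms by (intro mult_pos_pos sum_pos2[of UNIV i0] sum_nonneg) (auto intro: sum_pos2[of UNIV j0])
  then show "(1 - t) * phi p1 p2 eps C z + t * phi p1 p2 eps C w < phi p1 p2 eps C ((1 - t) *\<^sub>R z + t *\<^sub>R w)"
    using phi_convex_comb[of p1 p2 eps C t z w] unfolding gap_def by linarith
qed

lemma phi_has_derivative: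
  fixes C :: "real^'m^'n"
  assumes "z \<in> Dhat C"
  shows "(phi p1 p2 eps C has_derivative (\<lambda>d. p1 \<bullet> fst d + p2 \<bullet> snd d
      - (\<Sum>i\<in>UNIV. \<Sum>j\<in>UNIV. Umat eps C (fst z) (snd z) $i$j * (fst d$i + snd d$j)))) (at z)"
proof -
  have "(phi p1 p2 eps C has_derivative (\<lambda>d. p1 \<bullet> fst d + p2 \<bullet> snd d
      + eps * (\<Sum>i\<in>UNIV. \<Sum>j\<in>UNIV. (- fst d$i - snd d$j) * inverse (slack C z i j)))) (at z)"
    using assms unfolding phi_eq_slack[abs_def] Dhat_iff_slack slack_def
    by (auto intro!: derivative_eq_intros bounded_linear.has_derivative[OF bounded_linear_vec_nth])
  moreover have "eps * ((- a - b) * inverse s) = - (eps / s * (a + b))" for a b s :: real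
    by (simp add: divide_inverse algebra_simps)
  ultimately show ?thesis
    by (simp add: Umat_eq_slack sum_distrib_left sum_negf)
qed

lemma continuous_on_phi: "continuous_on (Dhat C) (phi p1 p2 eps C)"
  by (intro continuous_at_imp_continuous_on ballI differentiable_imp_continuous_within
      differentiableI[OF phi_has_derivative])

lemma Umat_in_Vo_if_max:
  fixes C :: "real^'m^'n"
  assumes eps: "0 < eps" and z: "z \<in> Dhat C"
    and max: "\<forall>w\<in>Dhat C. phi p1 p2 eps C w \<le> phi p1 p2 eps C z"
  shows "Umat eps C (fst z) (snd z) \<in> Vo p1 p2"
proof -
  let ?U = "Umat eps C (fst z) (snd z)"
  have "(\<lambda>d. p1 \<bullet> fst d + p2 \<bullet> snd d - (\<Sum>i\<in>UNIV. \<Sum>j\<in>UNIV. ?U$i$j * (fst d$i + snd d$j))) = (\<lambda>d. 0)"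
    using max by (intro differential_zero_maxmin[OF z open_Dhat phi_has_derivative[OF z]]) blast
  then have grad: "p1 \<bullet> fst d + p2 \<bullet> snd d = (\<Sum>i\<in>UNIV. \<Sum>j\<in>UNIV. ?U$i$j * (fst d$i + snd d$j))" for d
    by (simp add: fun_eq_iff)
  have "p1$i = (\<Sum>j\<in>UNIV. ?U$i$j)" for i
  proof -
    have "p1$i = (\<Sum>i'\<in>UNIV. \<Sum>j\<in>UNIV. ?U$i'$j * (axis i 1 $ i' + 0 $ j))"
      using grad[of "(axis i 1, 0)"] by (simp add: inner_axis)
    also have "\<dots> = (\<Sum>j\<in>UNIV. ?U$i$j)"
      by (simp add: axis_def if_distrib[of "\<lambda>x. _ * x"] cong: if_cong) (subst sum.swap, simp)
    finally show ?thesis .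
  qed
  moreover have "p2$j = (\<Sum>i\<in>UNIV. ?U$i$j)" for j
  proof -
    have "p2$j = (\<Sum>i\<in>UNIV. \<Sum>j'\<in>UNIV. ?U$i$j' * (0 $ i + axis j 1 $ j'))"
      using grad[of "(0, axis j 1)"] by (simp add: inner_axis)
    also have "\<dots> = (\<Sum>i\<in>UNIV. ?U$i$j)"
      by (simp add: axis_def if_distrib[of "\<lambda>x. _ * x"] cong: if_cong)
    finally show ?thesis .
  qed
  moreover have "0 < ?U$i$j" for i j
    using eps z by (simp add: Umat_eq_slack Dhat_iff_slack)
  ultimately show ?thesis
    by (auto simp: Vo_def Vset_def less_imp_le)
qed

section \<open>Existence and location of the maximisers\<close>

lemma Vo_nonempty:
  assumes "\<forall>i. 0 < p1$i" "\<forall>j. 0 < p2$j" and "(\<Sum>i\<in>UNIV. p1$i) = (\<Sum>j\<in>UNIV. p2$j)"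
  shows "Vo p1 p2 \<noteq> {}"
proof -
  define s where "s = (\<Sum>i\<in>UNIV. p1$i)"
  have "0 < s"
    unfolding s_def using assms(1) by (intro sum_pos) auto
  then have "(\<chi> i j. p1$i * p2$j / s) \<in> Vo p1 p2"
    using assms by (auto simp: Vo_def Vset_def less_imp_le s_def
        simp flip: sum_divide_distrib sum_distrib_left sum_distrib_right)
  then show ?thesis
    by blast
qed

lemma bounded_balanced:
  "bounded {z :: (real^'n) \<times> (real^'m). balanced z \<and> (\<forall>i j. \<bar>fst z$i + snd z$j\<bar> \<le> B)}"
proof -
  define N1 where "N1 = real CARD('n)"
  define N2 where "N2 = real CARD('m)"
  have N: "1 \<le> N1" "1 \<le> N2"
    by (simp_all add: N1_def N2_def Suc_le_eq)
  have "norm z \<le> (N1 + N2) * (B + N1 * N2 * B)"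
    if z: "balanced z" "\<forall>i j. \<bar>fst z$i + snd z$j\<bar> \<le> B" for z :: "(real^'n) \<times> (real^'m)"
  proof -
    define s where "s = (\<Sum>i\<in>UNIV. fst z$i)"
    have row: "\<bar>N2 * fst z$i + s\<bar> \<le> N2 * B" for i
      using sum_norm_bound[of UNIV "\<lambda>j. fst z$i + snd z$j" B] z
      by (simp add: sum.distrib s_def N2_def balanced_def)
    have col: "\<bar>N1 * snd z$j + s\<bar> \<le> N1 * B" for j
      using sum_norm_bound[of UNIV "\<lambda>i. fst z$i + snd z$j" B] z
      by (simp add: sum.distrib s_def N1_def add.commute)
    have "\<bar>(N1 + N2) * s\<bar> \<le> N1 * (N2 * B)"
      using sum_norm_bound[of UNIV "\<lambda>i. N2 * fst z$i + s" "N2 * B"] row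
      by (simp add: sum.distrib s_def N1_def sum_distrib_left algebra_simps)
    moreover have "\<bar>s\<bar> \<le> \<bar>(N1 + N2) * s\<bar>"
      using N by (simp add: abs_mult mult_le_cancel_right1)
    ultimately have s: "\<bar>s\<bar> \<le> N1 * N2 * B"
      by simp
    have "\<bar>fst z$i\<bar> \<le> B + N1 * N2 * B" for i
      using abs_le_of_abs_scaled_add_le[OF N(2) row[of i]] s by linarith
    then have "norm (fst z) \<le> N1 * (B + N1 * N2 * B)"
      using norm_le_l1_cart[of "fst z"] sum_bounded_above[of UNIV "\<lambda>i. \<bar>fst z$i\<bar>"] by (force simp: N1_def)
    moreover have "\<bar>snd z$j\<bar> \<le> B + N1 * N2 * B" for j
      using abs_le_of_abs_scaled_add_le[OF N(1) col[of j]] s by linarith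
    then have "norm (snd z) \<le> N2 * (B + N1 * N2 * B)"
      using norm_le_l1_cart[of "snd z"] sum_bounded_above[of UNIV "\<lambda>j. \<bar>snd z$j\<bar>"] by (force simp: N2_def)
    ultimately show ?thesis
      using norm_Pair_le[of "fst z" "snd z"] by (simp add: algebra_simps)
  qed
  then show ?thesis
    unfolding bounded_iff by blast
qed

lemma compact_slack_box:
  fixes C :: "real^'m^'n"
  shows "compact {z. balanced z \<and> (\<forall>i j. lo i j \<le> slack C z i j \<and> slack C z i j \<le> hi i j)}"
    (is "compact ?K")
proof -
  define B where "B = (\<Sum>i\<in>UNIV. \<Sum>j\<in>UNIV. \<bar>C$i$j\<bar> + \<bar>lo i j\<bar> + \<bar>hi i j\<bar>)"
  have B: "\<bar>C$i$j\<bar> + \<bar>lo i j\<bar> + \<bar>hi i j\<bar> \<le> B" for i j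
  proof -
    have "\<bar>C$i$j\<bar> + \<bar>lo i j\<bar> + \<bar>hi i j\<bar> \<le> (\<Sum>j\<in>UNIV. \<bar>C$i$j\<bar> + \<bar>lo i j\<bar> + \<bar>hi i j\<bar>)"
      by (rule member_le_sum) auto
    also have "\<dots> \<le> B"
      unfolding B_def by (rule member_le_sum) (auto intro: sum_nonneg)
    finally show ?thesis .
  qed
  have "\<bar>fst z$i + snd z$j\<bar> \<le> B" if "z \<in> ?K" for z i j
  proof -
    have "lo i j \<le> slack C z i j" "slack C z i j \<le> hi i j"
      using that by auto
    then show ?thesis
      using B[of i j] unfolding slack_def by (smt (verit))
  qed
  then have "?K \<subseteq> {z. balanced z \<and> (\<forall>i j. \<bar>fst z$i + snd z$j\<bar> \<le> B)}"
    by blast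
  then have "bounded ?K"
    using bounded_balanced bounded_subset by blast
  moreover have "closed ?K"
    unfolding balanced_def slack_def
    by (intro closed_Collect_conj closed_Collect_all closed_Collect_le closed_Collect_eq continuous_intros)
  ultimately show ?thesis
    by (simp add: compact_eq_bounded_closed)
qed

lemma slack_bounds_if_duality_gap_le:
  fixes C V :: "real^'m^'n"
  assumes eps: "0 < eps" and z: "z \<in> Dhat C" and V: "V \<in> Vo p1 p2"
    and R: "tau_obj C eps V - phi p1 p2 eps C z \<le> R"
  shows "eps * exp (- (R + eps) / eps) / V$i$j \<le> slack C z i j \<and> slack C z i j \<le> 2 * (R + eps) / V$i$j"
proof -
  have pos: "0 < slack C z i j * V$i$j" "0 < V$i$j" for i j
    using z V by (auto simp: Dhat_iff_slack Vo_def)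
  have "log_gap eps (slack C z i j * V$i$j) \<le> (\<Sum>j\<in>UNIV. log_gap eps (slack C z i j * V$i$j))"
    by (rule member_le_sum) (auto intro: log_gap_nonneg eps pos)
  also have "\<dots> \<le> (\<Sum>i\<in>UNIV. \<Sum>j\<in>UNIV. log_gap eps (slack C z i j * V$i$j))"
    by (rule member_le_sum) (auto intro!: sum_nonneg log_gap_nonneg eps pos)
  also have "\<dots> \<le> R"
    using tau_obj_minus_phi[OF eps z V] R by simp
  finally show ?thesis
    using log_gap_le_imp_bounds[OF eps pos(1)] pos(2) by (simp add: divide_le_eq le_divide_eq)
qed

lemma superlevel_set_in_compact:
  fixes C V :: "real^'m^'n"
  assumes eps: "0 < eps" and V: "V \<in> Vo p1 p2"
  shows "\<exists>K. compact K \<and> K \<subseteq> D C \<and> {z \<in> D C. phi p1 p2 eps C z0 \<le> phi p1 p2 eps C z} \<subseteq> K"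
proof -
  define R where "R = tau_obj C eps V - phi p1 p2 eps C z0"
  define K where "K = {z. balanced z \<and> (\<forall>i j. eps * exp (- (R + eps) / eps) / V$i$j \<le> slack C z i j
      \<and> slack C z i j \<le> 2 * (R + eps) / V$i$j)}"
  have "compact K"
    unfolding K_def by (rule compact_slack_box)
  moreover have "z \<in> D C" if "z \<in> K" for z
  proof -
    have "0 < eps * exp (- (R + eps) / eps) / V$i$j" for i j
      using V eps by (simp add: Vo_def)
    then have "0 < slack C z i j" for i j
      using that unfolding K_def by (blast intro: less_le_trans)
    then show ?thesis
      using that by (simp add: K_def D_iff_balanced Dhat_iff_slack)
  qed
  moreover have "z \<in> K" if "z \<in> D C" "phi p1 p2 eps C z0 \<le> phi p1 p2 eps C z" for z
  proof -
    have "z \<in> Dhat C" "tau_obj C eps V - phi p1 p2 eps C z \<le> R"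
      using that by (simp_all add: D_iff_balanced R_def)
    then show ?thesis
      using slack_bounds_if_duality_gap_le[OF eps _ V] that(1) by (simp add: K_def D_iff_balanced)
  qed
  ultimately show ?thesis
    by blast
qed

lemma phi_attains_max:
  fixes C :: "real^'m^'n"
  assumes eps: "0 < eps" and pos: "\<forall>i. 0 < p1$i" "\<forall>j. 0 < p2$j"
    and mass: "(\<Sum>i\<in>UNIV. p1$i) = (\<Sum>j\<in>UNIV. p2$j)"
  shows "\<exists>u\<in>D C. \<forall>w\<in>Dhat C. phi p1 p2 eps C w \<le> phi p1 p2 eps C u"
proof -
  let ?phi = "phi p1 p2 eps C"
  obtain V where V: "V \<in> Vo p1 p2"
    using Vo_nonempty[OF pos mass] by blast
  obtain z0 where z0: "z0 \<in> D C"
    using Dhat_nonempty exists_D_same_phi[OF mass] by blast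
  obtain K where "compact K" "K \<subseteq> D C" and superlevel: "{z \<in> D C. ?phi z0 \<le> ?phi z} \<subseteq> K"
    using superlevel_set_in_compact[OF eps V] by blast
  moreover have "continuous_on K ?phi"
    by (rule continuous_on_subset[OF continuous_on_phi]) (use \<open>K \<subseteq> D C\<close> in \<open>auto simp: D_iff_balanced\<close>)
  ultimately obtain u where "u \<in> K" and u: "\<forall>w\<in>K. ?phi w \<le> ?phi u"
    using continuous_attains_sup[of K ?phi] z0 by blast
  have "?phi w \<le> ?phi u" if w: "w \<in> Dhat C" for w
  proof -
    obtain w' where "w' \<in> D C" "?phi w' = ?phi w"
      using exists_D_same_phi[OF mass w] by blast
    then show ?thesis
      using u superlevel z0 by (metis (mono_tags, lifting) linorder_le_cases mem_Collect_eq order_trans subsetD)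
  qed
  then show ?thesis
    using \<open>u \<in> K\<close> \<open>K \<subseteq> D C\<close> by blast
qed

lemma argmax_phi_eq_Lline:
  fixes C :: "real^'m^'n"
  assumes eps: "0 < eps" and mass: "(\<Sum>i\<in>UNIV. p1$i) = (\<Sum>j\<in>UNIV. p2$j)"
    and u: "(u1, u2) \<in> Dhat C" and max: "\<forall>w\<in>Dhat C. phi p1 p2 eps C w \<le> phi p1 p2 eps C (u1, u2)"
  shows "{z \<in> Dhat C. \<forall>w\<in>Dhat C. phi p1 p2 eps C w \<le> phi p1 p2 eps C z} = Lline u1 u2"
proof (intro set_eqI iffI)
  fix z
  assume "z \<in> {z \<in> Dhat C. \<forall>w\<in>Dhat C. phi p1 p2 eps C w \<le> phi p1 p2 eps C z}"
  then have z: "z \<in> Dhat C" and "phi p1 p2 eps C z = phi p1 p2 eps C (u1, u2)"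
    using u max by (auto intro: order.antisym)
  moreover have U: "Umat eps C u1 u2 \<in> Vo p1 p2"
    using Umat_in_Vo_if_max[OF eps u max] by simp
  ultimately have "phi p1 p2 eps C z = tau_obj C eps (Umat eps C u1 u2)"
    using phi_eq_tau_obj_Umat[OF eps u] by simp
  then have "Umat eps C u1 u2 = Umat eps C (fst z) (snd z)"
    by (rule phi_eq_tau_obj_imp_Umat[OF eps z U])
  then show "z \<in> Lline u1 u2"
    using Umat_eq_iff_mem_Lline[of eps C "fst z" "snd z" u1 u2] eps by simp
next
  fix z
  assume z: "z \<in> Lline u1 u2"
  then show "z \<in> {z \<in> Dhat C. \<forall>w\<in>Dhat C. phi p1 p2 eps C w \<le> phi p1 p2 eps C z}"
    using u max Dhat_Lline[OF z] phi_Lline[OF mass z] by simp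
qed

theorem theorem1p1:
  fixes C :: "real^'m^'n" and p1 :: "real^'n" and p2 :: "real^'m" and eps :: real
  assumes eps: "eps > 0"
    and p1pos: "\<forall>i. p1$i > 0" and p2pos: "\<forall>j. p2$j > 0"
    and mass: "(\<Sum>i\<in>UNIV. p1$i) = (\<Sum>j\<in>UNIV. p2$j)"
  shows "concave_on (Dhat C) (phi p1 p2 eps C)
    \<and> strict_concave_on (D C) (phi p1 p2 eps C)
    \<and> (\<exists>z\<in>Dhat C. \<forall>w\<in>Dhat C. phi p1 p2 eps C w \<le> phi p1 p2 eps C z)
    \<and> (\<exists>z\<in>D C. \<forall>w\<in>D C. phi p1 p2 eps C w \<le> phi p1 p2 eps C z)
    \<and> (SUP z\<in>Dhat C. phi p1 p2 eps C z) = tau_beta C p1 p2 eps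
    \<and> (SUP z\<in>D C. phi p1 p2 eps C z) = tau_beta C p1 p2 eps
    \<and> (\<exists>u1 u2.
          {z \<in> Dhat C. \<forall>w\<in>Dhat C. phi p1 p2 eps C w \<le> phi p1 p2 eps C z} = Lline u1 u2
        \<and> Lline u1 u2 \<inter> D C = {(u1, u2)}
        \<and> Umat eps C u1 u2 \<in> Vo p1 p2
        \<and> tau_obj C eps (Umat eps C u1 u2) = tau_beta C p1 p2 eps
        \<and> (\<forall>V\<in>Vo p1 p2. tau_obj C eps (Umat eps C u1 u2) \<le> tau_obj C eps V)
        \<and> (\<forall>V\<in>Vo p1 p2. tau_obj C eps V = tau_beta C p1 p2 eps \<longrightarrow> V = Umat eps C u1 u2)
        \<and> (\<forall>x y. (x, y) \<in> D C \<and> Umat eps C x y \<in> Vo p1 p2 \<longrightarrow> (x, y) = (u1, u2)))"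
proof -
  let ?phi = "phi p1 p2 eps C"
  obtain u1 u2 where uD: "(u1, u2) \<in> D C" and max: "\<forall>w\<in>Dhat C. ?phi w \<le> ?phi (u1, u2)"
    using phi_attains_max[OF eps p1pos p2pos mass, of C] by (metis surj_pair)
  have u: "(u1, u2) \<in> Dhat C" and maxD: "\<forall>w\<in>D C. ?phi w \<le> ?phi (u1, u2)"
    using uD max by (simp_all add: D_iff_balanced)
  have U: "Umat eps C u1 u2 \<in> Vo p1 p2"
    using Umat_in_Vo_if_max[OF eps u max] by simp
  note minimiser = Umat_unique_minimiser[OF eps u, unfolded fst_conv snd_conv, OF U]
  have tau: "?phi (u1, u2) = tau_beta C p1 p2 eps"
    using phi_eq_tau_obj_Umat[OF eps u] U minimiser(2) by simp
  have sup: "(SUP z\<in>S. ?phi z) = tau_beta C p1 p2 eps" if "(u1, u2) \<in> S" "\<forall>w\<in>S. ?phi w \<le> ?phi (u1, u2)" for S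
    unfolding tau[symmetric] by (rule cSup_eq_maximum) (use that in auto)
  show ?thesis
  proof (intro conjI bexI[of _ "(u1, u2)"] exI[of _ u1] exI[of _ u2] ballI allI impI)
    fix x y
    assume "(x, y) \<in> D C \<and> Umat eps C x y \<in> Vo p1 p2"
    then show "(x, y) = (u1, u2)"
      using Umat_feasible_unique_on_D[OF eps _ uD] U by (metis fst_conv snd_conv)
  qed (fact concave_on_phi[OF eps] strict_concave_on_phi[OF eps] u uD max[rule_format] maxD[rule_format]
      sup[OF u max] sup[OF uD maxD] argmax_phi_eq_Lline[OF eps mass u max] Lline_Int_D[OF uD] U
      minimiser(1,3) minimiser(2)[symmetric])+
qed

end
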